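(* With the notation below, the map $\psi\colon L_{\mathbb{R}}\to\mathbb{Z}^6$ defined by $\psi(\iota_{\mathbb{R}}(\bm q))=\lceil(\gamma(\bm q),-\gamma(\bm q))\rceil$ (componentwise ceiling) for all $\bm q\in\mathbb{R}^2$ is a compatible $\mathbb{Z}^6$-stratification of $L_{\mathbb{R}}$ with the cell structure described below.
   Context: Let $L\subseteq\mathbb{Z}^6$ be the lattice generated by $(1,-1,0,-1,1,0)$ and $(0,-1,1,0,1,-1)$ (the lattice of the diagonal embedding $\mathbb{P}^2\to\mathbb{P}^2\times\mathbb{P}^2$), $\iota\colon\mathbb{Z}^2\to L$ the isomorphism sending the standard basis to these generators, $\iota_{\mathbb{R}}\colon\mathbb{R}^2\to\mathbb{R}^6$ its linear extension, with image $L_{\mathbb{R}}=L\otimes\mathbb{R}$. Let $\mathcal S\subseteq\mathbb{R}^3$ (the staircase surface) be the closure of $\{\bm p\in\mathbb{R}^3:\lceil p_1\rceil+\lceil p_2\rceil+\lceil p_3\rceil=0$ and at least one $p_i\in\mathbb{Z}\}$, with the polyhedral cell structure given by its intersection with the periodic arrangement of hyperplanes $\{p_i=j\}$, $i=1,2,3$, $j\in\mathbb{Z}$ (maximal cells are unit squares). Define $\gamma\colon\mathbb{R}^2\to\mathcal S$ by sending $\bm q=(q_1,q_2)$ to $(q_1,-q_1-q_2,q_2)\in\mathbb{R}^3$ and then projecting onto $\mathcal S$ along the direction $(1,1,1)$ (i.e., $\gamma(\bm q)$ is the point of $\mathcal S$ on the line $(q_1,-q_1-q_2,q_2)+\mathbb{R}(1,1,1)$);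 $\gamma$ is a homeomorphism, and $\iota(\bm u)=(\gamma(\bm u),-\gamma(\bm u))$ for $\bm u\in\mathbb{Z}^2$. The cell structure on $L_{\mathbb{R}}$ is the one transported from $\mathcal S$ via the homeomorphism $\iota_{\mathbb{R}}\circ\gamma^{-1}$ (equivalently, projecting $\mathcal S$ along $(1,1,1)$); it is $L$-equivariant. Give $\mathbb{Z}^6$ the componentwise order and Alexandrov topology (open = up-closed). A compatible $\mathbb{Z}^6$-stratification is a continuous map $\psi\colon L_{\mathbb{R}}\to\mathbb{Z}^6$, constant on each open cell, with $\psi(\bm p+\bm v)=\psi(\bm p)+\bm v$ for all $\bm p\in L_{\mathbb{R}}$, $\bm v\in L$. *)

theory Defs
  imports "HOL-Analysis.Analysis"
begin

definition gen1 :: "int^6" where "gen1 = vector [1, -1, 0, -1, 1, 0]"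
definition gen2 :: "int^6" where "gen2 = vector [0, -1, 1, 0, 1, -1]"

definition real_vec :: "int^'n \<Rightarrow> real^'n" where
  "real_vec v = (\<chi> i. real_of_int (v $ i))"

definition ceil_vec :: "real^'n \<Rightarrow> int^'n" where
  "ceil_vec x = (\<chi> i. \<lceil>x $ i\<rceil>)"

definition latL :: "(int^6) set" where
  "latL = {a *s gen1 + b *s gen2 | a b. True}"

definition iotaR :: "real^2 \<Rightarrow> real^6" where
  "iotaR q = (q $ 1) *\<^sub>R real_vec gen1 + (q $ 2) *\<^sub>R real_vec gen2"

definition LR :: "(real^6) set" where
  "LR = range iotaR"

definition staircase :: "(real^3) set" where
  "staircase = closure {p. \<lceil>p $ 1\<rceil> + \<lceil>p $ 2\<rceil> + \<lceil>p $ 3\<rceil> = 0 \<and> (\<exists>i. p $ i \<in> \<int>)}"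

definition gamma :: "real^2 \<Rightarrow> real^3" where
  "gamma q = (THE s. s \<in> staircase \<and>
      (\<exists>t::real. s = vector [q $ 1, - (q $ 1) - (q $ 2), q $ 2] + t *\<^sub>R vector [1, 1, 1]))"

definition pair_neg :: "real^3 \<Rightarrow> real^6" where
  "pair_neg x = vector [x $ 1, x $ 2, x $ 3, - (x $ 1), - (x $ 2), - (x $ 3)]"

definition arr_open_face :: "(real^3) set \<Rightarrow> bool" where
  "arr_open_face C \<longleftrightarrow> (\<exists>F :: 3 \<Rightarrow> real set.
      (\<forall>i. \<exists>j::int. F i = {real_of_int j} \<or> F i = {real_of_int j <..< real_of_int j + 1}) \<and>
      C = {p. \<forall>i. p $ i \<in> F i})"

text \<open>Open cells of S: relative interiors of the cells of S, i.e. open faces of the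
  arrangement contained in S.\<close>
definition S_open_cells :: "(real^3) set set" where
  "S_open_cells = {C. arr_open_face C \<and> C \<subseteq> staircase}"

definition LR_open_cells :: "(real^6) set set" where
  "LR_open_cells = {iotaR ` (gamma -` C) | C. C \<in> S_open_cells}"

text \<open>Componentwise order on Z^6 and its up-closed (Alexandrov-open) sets.\<close>
definition zle :: "int^6 \<Rightarrow> int^6 \<Rightarrow> bool" where
  "zle a b \<longleftrightarrow> (\<forall>i. a $ i \<le> b $ i)"

definition up_closed :: "(int^6) set \<Rightarrow> bool" where
  "up_closed U \<longleftrightarrow> (\<forall>a\<in>U. \<forall>b. zle a b \<longrightarrow> b \<in> U)"

definition compatible_strat :: "(real^6 \<Rightarrow> int^6) \<Rightarrow> bool" where
  "compatible_strat \<psi> \<longleftrightarrow>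
     (\<forall>U. up_closed U \<longrightarrow> openin (top_of_set LR) {p \<in> LR. \<psi> p \<in> U}) \<and>
     (\<forall>D \<in> LR_open_cells. \<exists>z. \<forall>p \<in> D. \<psi> p = z) \<and>
     (\<forall>p \<in> LR. \<forall>v \<in> latL. \<psi> (p + real_vec v) = \<psi> p + v)"

end

theory Submission
  imports Defs
begin

(* The staircase, the closure of {p. sum of the ceilings of p_i is 0 and some p_i is an integer},
   is the set where the ceilings of the coordinates sum to at most 0 and their floors to at least
   -2 (at least 1 - n in dimension n). No two of its points are strictly comparable componentwise,
   so every line in direction (1,1,1) meets it at most once, and a supremum argument shows that it
   meets it. Hence gamma is the projection along (1,1,1); it is Lipschitz and commutes with integer
   translations of coordinate sum zero. Since psi = (ceil gamma, - floor gamma), continuity into the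
   Alexandrov topology follows from continuity of gamma, lower semicontinuity of the ceiling and
   upper semicontinuity of the floor; ceilings and floors are constant on the open faces of the
   arrangement; and L-equivariance is the translation property of gamma. *)

lemma eventually_ceiling_floor_nhds:
  fixes x :: real
  shows "\<forall>\<^sub>F y in nhds x. \<lceil>x\<rceil> \<le> \<lceil>y\<rceil> \<and> \<lfloor>y\<rfloor> \<le> \<lfloor>x\<rfloor>"
proof -
  have "\<forall>\<^sub>F y in nhds x. of_int \<lceil>x\<rceil> - 1 < y" "\<forall>\<^sub>F y in nhds x. y < of_int \<lfloor>x\<rfloor> + 1"
    by (intro order_tendstoD[OF filterlim_ident]; linarith)+
  then show ?thesis
    by eventually_elim (simp add: le_ceiling_iff floor_le_iff)
qed

lemma eventually_ceiling_floor_nhds_vec: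
  fixes x :: "real^'n"
  shows "\<forall>\<^sub>F y in nhds x. \<forall>i. \<lceil>x$i\<rceil> \<le> \<lceil>y$i\<rceil> \<and> \<lfloor>y$i\<rfloor> \<le> \<lfloor>x$i\<rfloor>"
proof (rule eventually_all_finite)
  fix i
  have "((\<lambda>y. y $ i) \<longlongrightarrow> x $ i) (nhds x)"
    by (rule tendsto_vec_nth[OF filterlim_ident])
  then show "\<forall>\<^sub>F y in nhds x. \<lceil>x$i\<rceil> \<le> \<lceil>y$i\<rceil> \<and> \<lfloor>y$i\<rfloor> \<le> \<lfloor>x$i\<rfloor>"
    by (rule eventually_compose_filterlim[OF eventually_ceiling_floor_nhds])
qed

lemma eventually_ceiling_add_at_right:
  fixes y b :: real
  shows "\<forall>\<^sub>F s in at_right b. \<lceil>y + s\<rceil> = \<lfloor>y + b\<rfloor> + 1"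
proof -
  have bounds: "y + b < of_int \<lfloor>y + b\<rfloor> + 1" "of_int \<lfloor>y + b\<rfloor> \<le> y + b"
    by (rule real_of_int_floor_add_one_gt of_int_floor_le)+
  show ?thesis
    unfolding eventually_at_right_field ceiling_eq_iff
    by (intro exI[of _ "of_int \<lfloor>y + b\<rfloor> + 1 - y"] conjI allI impI) (use bounds in linarith)+
qed

lemma ceiling_minus_floor: "\<lceil>x::real\<rceil> - \<lfloor>x\<rfloor> = of_bool (x \<notin> \<int>)"
  by (auto elim!: Ints_cases simp: ceiling_altdef) (metis Ints_of_int)

lemma ceiling_Ints_add: "x \<in> \<int> \<Longrightarrow> 0 < d \<Longrightarrow> d \<le> 1 \<Longrightarrow> \<lceil>x + d\<rceil> = \<lceil>x\<rceil> + 1"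
  for x d :: real
  by (auto elim!: Ints_cases simp: ceiling_eq_iff)

lemma closed_eventually_not_mem:
  assumes "\<And>x. x \<notin> S \<Longrightarrow> \<forall>\<^sub>F y in nhds x. y \<notin> S"
  shows "closed S"
  using assms unfolding closed_def open_subopen[of "- S"] eventually_nhds
  by (metis ComplD ComplI subsetI)

lemma closed_sum_ceiling_le: "closed {p::real^'n. (\<Sum>i\<in>UNIV. \<lceil>p$i\<rceil>) \<le> c}"
proof (rule closed_eventually_not_mem)
  fix x :: "real^'n" assume x: "x \<notin> {p. (\<Sum>i\<in>UNIV. \<lceil>p$i\<rceil>) \<le> c}"
  from eventually_ceiling_floor_nhds_vec[of x]
  show "\<forall>\<^sub>F y in nhds x. y \<notin> {p. (\<Sum>i\<in>UNIV. \<lceil>p$i\<rceil>) \<le> c}"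
  proof eventually_elim
    case (elim y)
    then have "(\<Sum>i\<in>UNIV. \<lceil>x$i\<rceil>) \<le> (\<Sum>i\<in>UNIV. \<lceil>y$i\<rceil>)" by (intro sum_mono) auto
    with x show ?case by auto
  qed
qed

lemma closed_sum_floor_ge: "closed {p::real^'n. c \<le> (\<Sum>i\<in>UNIV. \<lfloor>p$i\<rfloor>)}"
proof (rule closed_eventually_not_mem)
  fix x :: "real^'n" assume x: "x \<notin> {p. c \<le> (\<Sum>i\<in>UNIV. \<lfloor>p$i\<rfloor>)}"
  from eventually_ceiling_floor_nhds_vec[of x]
  show "\<forall>\<^sub>F y in nhds x. y \<notin> {p. c \<le> (\<Sum>i\<in>UNIV. \<lfloor>p$i\<rfloor>)}"
  proof eventually_elim
    case (elim y)
    then have "(\<Sum>i\<in>UNIV. \<lfloor>y$i\<rfloor>) \<le> (\<Sum>i\<in>UNIV. \<lfloor>x$i\<rfloor>)" by (intro sum_mono) auto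
    with x show ?case by auto
  qed
qed

(* If the ceilings of p sum to -k, the floor condition says that at least k + 1 coordinates of p
   are integers. *)
definition stairs :: "(real^'n) set" where
  "stairs = {p. (\<Sum>i\<in>UNIV. \<lceil>p$i\<rceil>) \<le> 0 \<and> 1 - int CARD('n) \<le> (\<Sum>i\<in>UNIV. \<lfloor>p$i\<rfloor>)}"

lemma closed_stairs: "closed stairs"
  unfolding stairs_def Collect_conj_eq by (intro closed_Int closed_sum_ceiling_le closed_sum_floor_ge)

lemma sum_floor_eq_sum_ceiling_minus_card:
  fixes p :: "real^'n"
  shows "(\<Sum>i\<in>UNIV. \<lfloor>p$i\<rfloor>) = (\<Sum>i\<in>UNIV. \<lceil>p$i\<rceil>) - int (card {i. p$i \<notin> \<int>})"
proof -
  have "(\<Sum>i\<in>UNIV. \<lceil>p$i\<rceil> - \<lfloor>p$i\<rfloor>) = int (card {i. p$i \<notin> \<int>})"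
    unfolding ceiling_minus_floor by simp
  then show ?thesis by (simp add: sum_subtractf)
qed

lemma staircase_subset_stairs:
  "{p::real^'n. (\<Sum>i\<in>UNIV. \<lceil>p$i\<rceil>) = 0 \<and> (\<exists>i. p$i \<in> \<int>)} \<subseteq> stairs"
proof safe
  fix p :: "real^'n" and i
  assume p: "(\<Sum>i\<in>UNIV. \<lceil>p$i\<rceil>) = 0" "p$i \<in> \<int>"
  have "{j. p$j \<notin> \<int>} \<subset> UNIV" using p(2) by auto
  then have "card {j. p$j \<notin> \<int>} < CARD('n)"
    by (simp add: psubset_card_mono)
  then show "p \<in> stairs"
    using p(1) sum_floor_eq_sum_ceiling_minus_card[of p] by (simp add: stairs_def)
qed

lemma stairs_subset_closure_staircase:
  "stairs \<subseteq> closure {p::real^'n. (\<Sum>i\<in>UNIV. \<lceil>p$i\<rceil>) = 0 \<and> (\<exists>i. p$i \<in> \<int>)}"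
    (is "_ \<subseteq> closure ?B")
proof
  fix p :: "real^'n" assume "p \<in> stairs"
  define I where "I = {i. p$i \<in> \<int>}"
  define k where "k = nat (- (\<Sum>i\<in>UNIV. \<lceil>p$i\<rceil>))"
  have k: "int k = - (\<Sum>i\<in>UNIV. \<lceil>p$i\<rceil>)"
    using \<open>p \<in> stairs\<close> by (simp add: k_def stairs_def)
  have "I = UNIV - {i. p$i \<notin> \<int>}" by (auto simp: I_def)
  then have "card I = CARD('n) - card {i. p$i \<notin> \<int>}"
    by (simp add: card_Diff_subset)
  then have "k < card I"
    using \<open>p \<in> stairs\<close> k sum_floor_eq_sum_ceiling_minus_card[of p] by (simp add: stairs_def)
  then obtain J where J: "J \<subseteq> I" "card J = k" "finite J"
    by (metis less_imp_le obtain_subset_with_card_n)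
  have "\<not> I \<subseteq> J"
    using J(2,3) \<open>k < card I\<close> card_mono[of J I] by linarith
  then obtain i0 where i0: "i0 \<in> I" "i0 \<notin> J"
    by blast
  \<comment> \<open>Raise k of the integer coordinates slightly: the ceiling sum becomes 0 and an integer
    coordinate is left over.\<close>
  define e :: "real^'n" where "e = (\<chi> i. of_bool (i \<in> J))"
  have "p + d *\<^sub>R e \<in> ?B" if "0 < d" "d < 1" for d
  proof -
    have "\<lceil>(p + d *\<^sub>R e)$i\<rceil> = \<lceil>p$i\<rceil> + of_bool (i \<in> J)" for i
      using J(1) that by (auto simp: e_def I_def ceiling_Ints_add)
    then have "(\<Sum>i\<in>UNIV. \<lceil>(p + d *\<^sub>R e)$i\<rceil>) = 0"
      using J(2) k by (simp add: sum.distrib)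
    moreover have "(p + d *\<^sub>R e)$i0 \<in> \<int>"
      using i0 by (simp add: e_def I_def)
    ultimately show ?thesis by blast
  qed
  then have "\<forall>\<^sub>F d in at_right 0. p + d *\<^sub>R e \<in> closure ?B"
    unfolding eventually_at_right_field using closure_subset
    by (intro exI[of _ 1] conjI allI impI) (simp, blast)
  moreover have "((\<lambda>d. p + d *\<^sub>R e) \<longlongrightarrow> p) (at_right 0)"
    by (auto intro!: tendsto_eq_intros)
  ultimately show "p \<in> closure ?B"
    by (intro Lim_in_closed_set[OF closed_closure]) auto
qed

lemma closure_staircase_eq_stairs:
  "closure {p::real^'n. (\<Sum>i\<in>UNIV. \<lceil>p$i\<rceil>) = 0 \<and> (\<exists>i. p$i \<in> \<int>)} = stairs"
  by (intro equalityI closure_minimal[OF staircase_subset_stairs closed_stairs]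
      stairs_subset_closure_staircase)

lemma staircase_eq_stairs: "staircase = stairs"
  using closure_staircase_eq_stairs[where 'n = 3] by (simp add: staircase_def sum_3)

lemma stairs_not_all_less:
  assumes "x \<in> stairs" "y \<in> stairs"
  shows "\<not> (\<forall>i. x$i < y$i)"
proof
  assume less: "\<forall>i. x$i < y$i"
  have "\<lfloor>x$i\<rfloor> + 1 \<le> \<lceil>y$i\<rceil>" for i
  proof -
    have "x$i < of_int \<lceil>y$i\<rceil>" using less le_of_int_ceiling less_le_trans by blast
    then have "\<lfloor>x$i\<rfloor> < \<lceil>y$i\<rceil>" by (simp add: floor_less_iff)
    then show ?thesis by simp
  qed
  then have "(\<Sum>i\<in>UNIV. \<lfloor>x$i\<rfloor> + 1) \<le> (\<Sum>i\<in>UNIV. \<lceil>y$i\<rceil>)" by (intro sum_mono)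
  with assms show False by (simp add: stairs_def sum.distrib)
qed

lemma stairs_line_offset_le:
  assumes "v + t *\<^sub>R 1 \<in> stairs" "w + s *\<^sub>R 1 \<in> stairs" "\<And>i. w$i - v$i \<le> d"
  shows "t - s \<le> d"
proof (rule ccontr)
  assume "\<not> t - s \<le> d"
  then have "(w + s *\<^sub>R 1)$i < (v + t *\<^sub>R 1)$i" for i using assms(3)[of i] by simp
  with stairs_not_all_less[OF assms(2,1)] show False by blast
qed

lemma stairs_line_offset_abs_le:
  assumes "v + t *\<^sub>R 1 \<in> stairs" "w + s *\<^sub>R 1 \<in> stairs" "\<And>i. \<bar>v$i - w$i\<bar> \<le> d"
  shows "\<bar>t - s\<bar> \<le> d"
  using stairs_line_offset_le[OF assms(1,2)] stairs_line_offset_le[OF assms(2,1)] assms(3)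
  by (smt (verit, best))

lemma stairs_line_unique:
  "v + t *\<^sub>R 1 \<in> stairs \<Longrightarrow> v + s *\<^sub>R 1 \<in> stairs \<Longrightarrow> t = s"
  using stairs_line_offset_abs_le[of v t v s 0] by simp

lemma stairs_meets_line: "\<exists>t. v + t *\<^sub>R 1 \<in> (stairs :: (real^'n) set)"
proof -
  define T where "T = {t. (\<Sum>i\<in>UNIV. \<lceil>v$i + t\<rceil>) \<le> 0}"
  define M where "M = (\<Sum>i\<in>UNIV. \<bar>v$i\<bar>)"
  have abs_le_M: "\<bar>v$i\<bar> \<le> M" for i
    unfolding M_def by (rule member_le_sum) auto
  have "- M \<in> T"
  proof -
    have "\<lceil>v$i + - M\<rceil> \<le> 0" for i using abs_le_M[of i] by (simp add: ceiling_le_iff)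
    then show ?thesis unfolding T_def mem_Collect_eq by (intro sum_nonpos)
  qed
  have T_le_M: "t \<le> M" if "t \<in> T" for t
  proof (rule ccontr)
    assume "\<not> t \<le> M"
    then have "0 < \<lceil>v$i + t\<rceil>" for i using abs_le_M[of i] by simp
    then have "0 < (\<Sum>i\<in>UNIV. \<lceil>v$i + t\<rceil>)" by (intro sum_pos) auto
    with that show False by (simp add: T_def)
  qed
  have T_vimage: "T = (\<lambda>t. v + t *\<^sub>R 1) -` {p. (\<Sum>i\<in>UNIV. \<lceil>p$i\<rceil>) \<le> 0}"
    by (simp add: T_def vimage_def)
  have "closed T"
    unfolding T_vimage by (intro continuous_closed_vimage closed_sum_ceiling_le continuous_intros)
  \<comment> \<open>The largest element b of T gives the point; just right of b every ceiling is the floor at b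
    plus one, which yields the floor condition.\<close>
  define b where "b = Sup T"
  have "bdd_above T" using T_le_M by (intro bdd_aboveI)
  then have "b \<in> T" and T_le_b: "\<And>t. t \<in> T \<Longrightarrow> t \<le> b"
    using \<open>- M \<in> T\<close> \<open>closed T\<close> by (auto simp: b_def intro: closed_contains_Sup cSup_upper)
  have "\<forall>\<^sub>F s in at_right b. b < s \<and> (\<forall>i. \<lceil>v$i + s\<rceil> = \<lfloor>v$i + b\<rfloor> + 1)"
    by (intro eventually_conj eventually_at_right_less eventually_all_finite
        eventually_ceiling_add_at_right)
  then obtain s where s: "b < s" "\<And>i. \<lceil>v$i + s\<rceil> = \<lfloor>v$i + b\<rfloor> + 1"
    using eventually_happens'[OF trivial_limit_at_right_real] by blast
  then have "s \<notin> T" using T_le_b by force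
  then have "0 < (\<Sum>i\<in>UNIV. \<lfloor>v$i + b\<rfloor> + 1)" using s(2) by (simp add: T_def)
  with \<open>b \<in> T\<close> have "v + b *\<^sub>R 1 \<in> stairs" by (simp add: T_def stairs_def sum.distrib)
  then show ?thesis by blast
qed

definition stairs_proj :: "real^'n \<Rightarrow> real^'n" where
  "stairs_proj v = (THE s. s \<in> stairs \<and> (\<exists>t. s = v + t *\<^sub>R 1))"

lemma stairs_proj_eqI: "v + t *\<^sub>R 1 \<in> stairs \<Longrightarrow> stairs_proj v = v + t *\<^sub>R 1"
  unfolding stairs_proj_def by (rule the_equality) (auto dest: stairs_line_unique)

lemma stairs_projE:
  obtains t where "v + t *\<^sub>R 1 \<in> stairs" "stairs_proj v = v + t *\<^sub>R 1"
  using stairs_meets_line stairs_proj_eqI by blast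

lemma stairs_proj_component_dist_le:
  "\<bar>stairs_proj v $ i - stairs_proj w $ i\<bar> \<le> 2 * norm (v - w)"
proof -
  obtain t s where t: "v + t *\<^sub>R 1 \<in> stairs" "stairs_proj v = v + t *\<^sub>R 1"
    and s: "w + s *\<^sub>R 1 \<in> stairs" "stairs_proj w = w + s *\<^sub>R 1"
    by (meson stairs_projE)
  have "\<bar>v$j - w$j\<bar> \<le> norm (v - w)" for j
    using component_le_norm_cart[of "v - w" j] by simp
  with t(1) s(1) have "\<bar>t - s\<bar> \<le> norm (v - w)"
    by (rule stairs_line_offset_abs_le)
  with \<open>\<bar>v$i - w$i\<bar> \<le> norm (v - w)\<close> show ?thesis
    unfolding t(2) s(2) by simp
qed

lemma continuous_on_stairs_proj:
  fixes S :: "(real^'n) set"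
  shows "continuous_on S stairs_proj"
proof (rule lipschitz_on_continuous_on)
  show "(2 * real CARD('n))-lipschitz_on S stairs_proj"
  proof (rule lipschitz_onI)
    fix v w :: "real^'n"
    have "dist (stairs_proj v) (stairs_proj w) \<le> (\<Sum>i\<in>UNIV. \<bar>stairs_proj v $ i - stairs_proj w $ i\<bar>)"
      unfolding dist_norm using norm_le_l1_cart[of "stairs_proj v - stairs_proj w"] by simp
    also have "\<dots> \<le> (\<Sum>i\<in>(UNIV :: 'n set). 2 * dist v w)"
      unfolding dist_norm by (intro sum_mono stairs_proj_component_dist_le)
    finally show "dist (stairs_proj v) (stairs_proj w) \<le> 2 * real CARD('n) * dist v w"
      by simp
  qed simp
qed

lemma stairs_add_int:
  assumes "s \<in> stairs" "(\<Sum>i\<in>UNIV. z$i) = 0"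
  shows "s + real_vec z \<in> stairs"
  using assms by (simp add: stairs_def real_vec_def sum.distrib)

lemma stairs_proj_add_int:
  assumes "(\<Sum>i\<in>UNIV. z$i) = 0"
  shows "stairs_proj (v + real_vec z) = stairs_proj v + real_vec z"
proof -
  obtain t where t: "v + t *\<^sub>R 1 \<in> stairs" "stairs_proj v = v + t *\<^sub>R 1"
    by (rule stairs_projE)
  have "(v + real_vec z) + t *\<^sub>R 1 = (v + t *\<^sub>R 1) + real_vec z"
    by (simp add: algebra_simps)
  with stairs_add_int[OF t(1) assms] show ?thesis
    using stairs_proj_eqI t(2) by metis
qed

lemma exhaust_6:
  fixes i :: 6
  shows "i = 1 \<or> i = 2 \<or> i = 3 \<or> i = 4 \<or> i = 5 \<or> i = 6"
proof (induct i)
  case (of_int z)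
  then have "z = 0 \<or> z = 1 \<or> z = 2 \<or> z = 3 \<or> z = 4 \<or> z = 5" by fastforce
  then show ?case by auto
qed

lemma forall_6: "(\<forall>i::6. P i) \<longleftrightarrow> P 1 \<and> P 2 \<and> P 3 \<and> P 4 \<and> P 5 \<and> P 6"
  by (metis exhaust_6)

lemma vector_6 [simp]:
  "(vector [a1, a2, a3, a4, a5, a6] :: 'a::zero^6) $ 1 = a1"
  "(vector [a1, a2, a3, a4, a5, a6] :: 'a::zero^6) $ 2 = a2"
  "(vector [a1, a2, a3, a4, a5, a6] :: 'a::zero^6) $ 3 = a3"
  "(vector [a1, a2, a3, a4, a5, a6] :: 'a::zero^6) $ 4 = a4"
  "(vector [a1, a2, a3, a4, a5, a6] :: 'a::zero^6) $ 5 = a5"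
  "(vector [a1, a2, a3, a4, a5, a6] :: 'a::zero^6) $ 6 = a6"
  unfolding vector_def by simp_all

definition zero_sum_vec :: "real^2 \<Rightarrow> real^3" where
  "zero_sum_vec q = vector [q $ 1, - (q $ 1) - (q $ 2), q $ 2]"

definition head3 :: "real^6 \<Rightarrow> real^3" where
  "head3 p = vector [p $ 1, p $ 2, p $ 3]"

lemma gamma_eq_stairs_proj: "gamma q = stairs_proj (zero_sum_vec q)"
proof -
  have "vector [1, 1, 1] = (1 :: real^3)"
    by (simp add: vec_eq_iff forall_3)
  then show ?thesis
    by (simp add: gamma_def stairs_proj_def zero_sum_vec_def staircase_eq_stairs)
qed

lemma iotaR_eq_pair_neg: "iotaR q = pair_neg (zero_sum_vec q)"
  by (simp add: vec_eq_iff forall_6 iotaR_def real_vec_def gen1_def gen2_def pair_neg_def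
      zero_sum_vec_def)

lemma iotaR_add: "iotaR (q + r) = iotaR q + iotaR r"
  by (simp add: iotaR_def algebra_simps)

lemma head3_pair_neg [simp]: "head3 (pair_neg x) = x"
  by (simp add: vec_eq_iff forall_3 head3_def pair_neg_def)

lemma continuous_on_head3: "continuous_on S head3"
proof -
  have "linear head3"
    by (rule linearI) (simp_all add: vec_eq_iff forall_3 head3_def)
  then show ?thesis
    by (simp add: linear_continuous_on linear_conv_bounded_linear)
qed

lemma pair_neg_add: "pair_neg (x + y) = pair_neg x + pair_neg y"
  by (simp add: vec_eq_iff forall_6 pair_neg_def)

lemma zero_sum_vec_add: "zero_sum_vec (q + r) = zero_sum_vec q + zero_sum_vec r"
  by (simp add: vec_eq_iff forall_3 zero_sum_vec_def)

lemma zero_sum_vec_of_int: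
  "zero_sum_vec (vector [of_int a, of_int b]) = real_vec (vector [a, - a - b, b])"
  by (simp add: vec_eq_iff forall_3 zero_sum_vec_def real_vec_def)

lemma pair_neg_real_vec_lattice:
  "pair_neg (real_vec (vector [a, - a - b, b])) = real_vec (a *s gen1 + b *s gen2)"
  by (simp add: vec_eq_iff forall_6 pair_neg_def real_vec_def gen1_def gen2_def)

lemma real_vec_lattice_eq_iotaR:
  "real_vec (a *s gen1 + b *s gen2) = iotaR (vector [of_int a, of_int b])"
  by (simp add: iotaR_eq_pair_neg zero_sum_vec_of_int pair_neg_real_vec_lattice)

lemma ceil_vec_add_real_vec: "ceil_vec (x + real_vec z) = ceil_vec x + z"
  by (simp add: vec_eq_iff ceil_vec_def real_vec_def)

lemma gamma_add_of_int:
  "gamma (q + vector [of_int a, of_int b]) = gamma q + real_vec (vector [a, - a - b, b])"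
  by (simp add: gamma_eq_stairs_proj zero_sum_vec_add zero_sum_vec_of_int stairs_proj_add_int
      sum_3)

lemma ceil_vec_pair_neg_eq:
  assumes "\<And>i. \<lceil>x$i\<rceil> = \<lceil>y$i\<rceil> \<and> \<lfloor>x$i\<rfloor> = \<lfloor>y$i\<rfloor>"
  shows "ceil_vec (pair_neg x) = ceil_vec (pair_neg y)"
  using assms[of 1] assms[of 2] assms[of 3]
  by (simp add: vec_eq_iff forall_6 ceil_vec_def pair_neg_def ceiling_minus)

lemma zle_ceil_vec_pair_neg:
  assumes "\<And>i. \<lceil>x$i\<rceil> \<le> \<lceil>y$i\<rceil> \<and> \<lfloor>y$i\<rfloor> \<le> \<lfloor>x$i\<rfloor>"
  shows "zle (ceil_vec (pair_neg x)) (ceil_vec (pair_neg y))"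
  using assms[of 1] assms[of 2] assms[of 3]
  by (simp add: zle_def forall_6 ceil_vec_def pair_neg_def ceiling_minus)

lemma arr_open_face_ceiling_floor_eq:
  assumes "arr_open_face C" "x \<in> C" "y \<in> C"
  shows "\<lceil>x$i\<rceil> = \<lceil>y$i\<rceil> \<and> \<lfloor>x$i\<rfloor> = \<lfloor>y$i\<rfloor>"
proof -
  obtain F :: "3 \<Rightarrow> real set" where
    F: "\<And>i. \<exists>j::int. F i = {of_int j} \<or> F i = {of_int j <..< of_int j + 1}"
    and C: "C = {p. \<forall>i. p $ i \<in> F i}"
    using assms(1) unfolding arr_open_face_def by blast
  obtain j :: int where "F i = {of_int j} \<or> F i = {of_int j <..< of_int j + 1}"
    using F by blast
  moreover have "x$i \<in> F i" "y$i \<in> F i" using assms(2,3) C by auto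
  ultimately consider "x$i = y$i" | "x$i \<in> {of_int j <..< of_int j + 1}" "y$i \<in> {of_int j <..< of_int j + 1}"
    by auto
  then show ?thesis
  proof cases
    case 2
    then have "\<lceil>x$i\<rceil> = j + 1" "\<lceil>y$i\<rceil> = j + 1" "\<lfloor>x$i\<rfloor> = j" "\<lfloor>y$i\<rfloor> = j"
      by (auto simp: ceiling_eq_iff floor_eq_iff)
    then show ?thesis by simp
  qed simp
qed

lemma openin_preimage_up_closed:
  assumes "\<And>x. x \<in> S \<Longrightarrow> \<forall>\<^sub>F y in nhds x. y \<in> S \<longrightarrow> zle (f x) (f y)" "up_closed U"
  shows "openin (top_of_set S) {p \<in> S. f p \<in> U}"
  unfolding openin_subopen[of _ "{p \<in> S. f p \<in> U}"]
proof safe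
  fix x assume "x \<in> S" "f x \<in> U"
  obtain N where "open N" "x \<in> N" and N: "\<And>y. y \<in> N \<Longrightarrow> y \<in> S \<Longrightarrow> zle (f x) (f y)"
    using assms(1)[OF \<open>x \<in> S\<close>] unfolding eventually_nhds by blast
  show "\<exists>T. openin (top_of_set S) T \<and> x \<in> T \<and> T \<subseteq> {p \<in> S. f p \<in> U}"
  proof (intro exI conjI)
    show "openin (top_of_set S) (S \<inter> N)" using \<open>open N\<close> by blast
    show "x \<in> S \<inter> N" using \<open>x \<in> S\<close> \<open>x \<in> N\<close> by blast
    show "S \<inter> N \<subseteq> {p \<in> S. f p \<in> U}"
      using N \<open>f x \<in> U\<close> assms(2) unfolding up_closed_def by blast
  qed
qed

lemma eventually_zle_ceil_vec_stairs_proj: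
  "\<forall>\<^sub>F y in nhds x.
     zle (ceil_vec (pair_neg (stairs_proj (head3 x)))) (ceil_vec (pair_neg (stairs_proj (head3 y))))"
proof -
  have "continuous_on UNIV (\<lambda>p. stairs_proj (head3 p))"
    by (rule continuous_on_compose2[OF continuous_on_stairs_proj continuous_on_head3]) auto
  then have "isCont (\<lambda>p. stairs_proj (head3 p)) x"
    by (simp add: continuous_on_eq_continuous_at)
  then have "((\<lambda>p. stairs_proj (head3 p)) \<longlongrightarrow> stairs_proj (head3 x)) (nhds x)"
    by (metis isCont_def tendsto_at_iff_tendsto_nhds)
  from eventually_compose_filterlim[OF eventually_ceiling_floor_nhds_vec this]
  show ?thesis
    by eventually_elim (simp add: zle_ceil_vec_pair_neg)
qed

lemma ceil_vec_pair_neg_gamma_add_lattice: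
  "ceil_vec (pair_neg (gamma (q + vector [of_int a, of_int b])))
     = ceil_vec (pair_neg (gamma q)) + (a *s gen1 + b *s gen2)"
  by (simp only: gamma_add_of_int pair_neg_add pair_neg_real_vec_lattice ceil_vec_add_real_vec)

theorem lemma5p8:
  fixes \<psi> :: "real^6 \<Rightarrow> int^6"
  assumes "\<forall>q. \<psi> (iotaR q) = ceil_vec (pair_neg (gamma q))"
  shows "compatible_strat \<psi>"
proof -
  have \<psi>_LR: "\<psi> p = ceil_vec (pair_neg (stairs_proj (head3 p)))" if "p \<in> LR" for p
    using that assms by (auto simp: LR_def iotaR_eq_pair_neg gamma_eq_stairs_proj)
  have "openin (top_of_set LR) {p \<in> LR. \<psi> p \<in> U}" if "up_closed U" for U
  proof (rule openin_preimage_up_closed[OF _ that])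
    fix x assume "x \<in> LR"
    from eventually_zle_ceil_vec_stairs_proj[of x]
    show "\<forall>\<^sub>F y in nhds x. y \<in> LR \<longrightarrow> zle (\<psi> x) (\<psi> y)"
      by eventually_elim (simp add: \<psi>_LR \<open>x \<in> LR\<close>)
  qed
  moreover have "\<exists>z. \<forall>p \<in> D. \<psi> p = z" if cell: "D \<in> LR_open_cells" for D
  proof -
    obtain C where D: "D = iotaR ` (gamma -` C)" and "arr_open_face C"
      using cell unfolding LR_open_cells_def S_open_cells_def by blast
    have "\<psi> (iotaR q) = ceil_vec (pair_neg (gamma q'))" if "gamma q \<in> C" "gamma q' \<in> C" for q q'
      using assms ceil_vec_pair_neg_eq[OF arr_open_face_ceiling_floor_eq[OF \<open>arr_open_face C\<close> that]]
      by simp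
    then show ?thesis
      unfolding D by (metis imageE vimageE)
  qed
  moreover have "\<psi> (p + real_vec v) = \<psi> p + v" if "p \<in> LR" "v \<in> latL" for p v
  proof -
    obtain q where p: "p = iotaR q" using \<open>p \<in> LR\<close> unfolding LR_def by blast
    obtain a b where v: "v = a *s gen1 + b *s gen2" using \<open>v \<in> latL\<close> unfolding latL_def by blast
    have "p + real_vec v = iotaR (q + vector [of_int a, of_int b])"
      by (simp add: p v real_vec_lattice_eq_iotaR iotaR_add)
    then show ?thesis
      using assms by (simp add: p v ceil_vec_pair_neg_gamma_add_lattice)
  qed
  ultimately show ?thesis unfolding compatible_strat_def by blast
qed

end
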